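(* Let $f(x,y)=\sum_{i,j=-\infty}^{\infty}\lambda(i,j)x^iy^j$ be a nonzero bilateral formal series with complex coefficients. Then $f$ is self-orthogonal (i.e. $f\perp f$) if and only if there exist integers $m_0,k_0$ and complex sequences $\{p_i\}_{i\in\mathbb{Z}}$, $\{q_i\}_{i\in\mathbb{Z}}$ with $p_{m_0}=0$, $q_{k_0}=0$ and $p_{k_0}=-q_{m_0}\neq 0$, such that $$f(x,y)=P(x)Q(y)-P(y)Q(x),$$ where $P(x)=\sum_{i=-\infty}^{\infty}p_ix^i$ and $Q(x)=\frac{1}{q_{m_0}}\sum_{i=-\infty}^{\infty}q_ix^i$.
   Context: A bilateral formal series in $x,y$ is a formal expression $\sum_{i,j\in\mathbb{Z}}\lambda(i,j)x^iy^j$ with complex coefficients (no convergence required). For two such series $f,g$, the expression $g(u,v)f(z,w)-g(u,w)f(z,v)+g(v,w)f(z,u)$ is a well-defined formal series in four independent variables $u,v,w,z$ (each product involves series in disjoint sets of variables). One writes $f\perp g$ ("$f$ is orthogonal to $g$") if this expression is identically zero, and calls $f$ self-orthogonal if $f\perp f$. *)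

theory Defs
  imports Complex_Main
begin

text \<open>A bilateral formal series in x,y is represented by its coefficient function
  lambda :: int => int => complex (coefficient of x^i y^j); a bilateral series in one
  variable by its coefficient function int => complex.\<close>

type_synonym bseries2 = "int \<Rightarrow> int \<Rightarrow> complex"
type_synonym bseries1 = "int \<Rightarrow> complex"

text \<open>Coefficient of u^a v^b w^c z^d in g(u,v)f(z,w) - g(u,w)f(z,v) + g(v,w)f(z,u).\<close>
definition orth_expr :: "bseries2 \<Rightarrow> bseries2 \<Rightarrow> int \<Rightarrow> int \<Rightarrow> int \<Rightarrow> int \<Rightarrow> complex" where
  "orth_expr f g a b c d = g a b * f d c - g a c * f d b + g b c * f d a"

definition orthogonal :: "bseries2 \<Rightarrow> bseries2 \<Rightarrow> bool" (infix "\<bottom>\<^sub>s" 50) where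
  "f \<bottom>\<^sub>s g \<longleftrightarrow> (\<forall>a b c d. orth_expr f g a b c d = 0)"

definition self_orthogonal :: "bseries2 \<Rightarrow> bool" where
  "self_orthogonal f \<longleftrightarrow> f \<bottom>\<^sub>s f"

definition bscale :: "complex \<Rightarrow> bseries1 \<Rightarrow> bseries1" where
  "bscale c P = (\<lambda>i. c * P i)"

definition tensor :: "bseries1 \<Rightarrow> bseries1 \<Rightarrow> bseries2" where
  "tensor P Q = (\<lambda>i j. P i * Q j)"

end

theory Submission
  imports Defs
begin

text \<open>The relations \<open>f \<bottom>\<^sub>s f\<close> are the Pluecker-type relations of \<open>f\<close>. Taking \<open>c = b\<close> gives
  \<open>f(b,b) f(d,a) = 0\<close>, so a nonzero self-orthogonal \<open>f\<close> vanishes on the diagonal. Fixing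
  \<open>f(m\<^sub>0,k\<^sub>0) \<noteq> 0\<close> and taking \<open>(d,c) = (m\<^sub>0,k\<^sub>0)\<close> expresses every coefficient \<open>f(i,j)\<close> through
  the row \<open>f(m\<^sub>0,\<cdot>)\<close> and the column \<open>f(\<cdot>,k\<^sub>0)\<close>, i.e. \<open>f = P(x)Q(y) - P(y)Q(x)\<close> with
  \<open>P = -f(m\<^sub>0,\<cdot>)\<close> and \<open>Q = f(\<cdot>,k\<^sub>0) / f(m\<^sub>0,k\<^sub>0)\<close>.\<close>

lemma self_orthogonalD:
  assumes "self_orthogonal f"
  shows "f a b * f d c - f a c * f d b + f b c * f d a = 0"
  using assms unfolding self_orthogonal_def orthogonal_def orth_expr_def by blast

lemma self_orthogonal_diag_eq_0:
  assumes "self_orthogonal f" and "f \<noteq> (\<lambda>i j. 0)"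
  shows "f b b = 0"
proof -
  obtain d a where "f d a \<noteq> 0" using assms(2) by blast
  moreover have "f b b * f d a = 0"
    using self_orthogonalD[OF assms(1), of a b d b] by simp
  ultimately show ?thesis by simp
qed

lemma self_orthogonal_expand:
  assumes "self_orthogonal f" and "f m k \<noteq> 0"
  shows "f i j = (f i k * f m j - f j k * f m i) / f m k"
  using self_orthogonalD[OF assms(1), of i j m k] assms(2)
  by (simp add: eq_divide_eq algebra_simps)

lemma self_orthogonal_alternating_tensor:
  "self_orthogonal (\<lambda>i j. P i * Q j - P j * Q i)"
  unfolding self_orthogonal_def orthogonal_def orth_expr_def
  by (simp add: algebra_simps)

theorem theorem2p1:
  fixes f :: bseries2
  assumes "f \<noteq> (\<lambda>i j. 0)"
  shows "self_orthogonal f \<longleftrightarrow>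
    (\<exists>(m0::int) (k0::int) (p::bseries1) (q::bseries1).
       p m0 = 0 \<and> q k0 = 0 \<and> p k0 = - q m0 \<and> q m0 \<noteq> 0 \<and>
       (let P = p; Q = bscale (1 / q m0) q in
          f = (\<lambda>i j. tensor P Q i j - tensor P Q j i)))"
    (is "_ \<longleftrightarrow> (\<exists>m0 k0 p q. ?rep m0 k0 p q)")
proof
  assume so: "self_orthogonal f"
  obtain m0 k0 where nz: "f m0 k0 \<noteq> 0" using assms by blast
  define p where "p i = - f m0 i" for i
  define q where "q j = f j k0" for j
  have expansion: "f i j = p i * bscale (1 / q m0) q j - p j * bscale (1 / q m0) q i" for i j
  proof -
    have "f i j = (f i k0 * f m0 j - f j k0 * f m0 i) / f m0 k0"
      by (rule self_orthogonal_expand[OF so nz])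
    also have "\<dots> = p i * bscale (1 / q m0) q j - p j * bscale (1 / q m0) q i"
      by (simp add: p_def q_def bscale_def diff_divide_distrib algebra_simps)
    finally show ?thesis .
  qed
  have "?rep m0 k0 p q"
    unfolding Let_def tensor_def
  proof (intro conjI)
    show "p m0 = 0" "q k0 = 0"
      using self_orthogonal_diag_eq_0[OF so assms] by (simp_all add: p_def q_def)
    show "p k0 = - q m0" "q m0 \<noteq> 0"
      using nz by (simp_all add: p_def q_def)
    show "f = (\<lambda>i j. p i * bscale (1 / q m0) q j - p j * bscale (1 / q m0) q i)"
      using expansion by blast
  qed
  then show "\<exists>m0 k0 p q. ?rep m0 k0 p q" by blast
next
  assume "\<exists>m0 k0 p q. ?rep m0 k0 p q"
  then obtain P Q where "f = (\<lambda>i j. P i * Q j - P j * Q i)"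
    unfolding Let_def tensor_def by blast
  then show "self_orthogonal f"
    using self_orthogonal_alternating_tensor by simp
qed

end
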